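(* Every unambiguous GFG automaton is determinizable by pruning.
   Context: An automaton is $\mathcal{A}=\langle\Sigma,Q,Q_0,\delta,\alpha\rangle$ with $\delta:Q\times\Sigma\to2^Q$ and an acceptance condition $\alpha$ (Büchi, co-Büchi, parity, Rabin or Streett) determining which runs (sequences $r_0r_1\cdots$ with $r_0\in Q_0$, $r_{i+1}\in\delta(r_i,a_{i+1})$) are accepting. It is unambiguous if every word in $L(\mathcal{A})$ has a single accepting run. It is good for games (GFG) if there is a strategy $g:\Sigma^*\to Q$ such that for every $w=a_1a_2\cdots$, $g(\epsilon),g(a_1),g(a_1a_2),\ldots$ is a run on $w$ that is accepting whenever $w\in L(\mathcal{A})$. $\mathcal{A}$ is determinizable by pruning if there are $q_0\in Q_0$ and $\delta':Q\times\Sigma\to Q$ with $\delta'(q,a)\in\delta(q,a)$ for all $q,a$ such that the deterministic automaton $\langle\Sigma,Q,q_0,\delta',\alpha\rangle$ recognizes $L(\mathcal{A})$. *)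

theory Defs
  imports Main
begin

datatype 'q acc_cond =
    Buchi "'q set"
  | CoBuchi "'q set"
  | Parity "'q \<Rightarrow> nat"
  | Rabin "('q set \<times> 'q set) list"
  | Streett "('q set \<times> 'q set) list"

record ('a, 'q) automaton =
  states :: "'q set"
  init :: "'q set"
  trans :: "'q \<Rightarrow> 'a \<Rightarrow> 'q set"
  acc :: "'q acc_cond"

definition wf_automaton :: "('a, 'q) automaton \<Rightarrow> bool" where
  "wf_automaton A \<longleftrightarrow> finite (states A) \<and> init A \<subseteq> states A \<and>
     (\<forall>q\<in>states A. \<forall>a. trans A q a \<subseteq> states A)"

definition complete_automaton :: "('a, 'q) automaton \<Rightarrow> bool" where
  "complete_automaton A \<longleftrightarrow> init A \<noteq> {} \<and> (\<forall>q\<in>states A. \<forall>a. trans A q a \<noteq> {})"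

definition inf_states :: "(nat \<Rightarrow> 'q) \<Rightarrow> 'q set" where
  "inf_states r = {q. \<exists>\<^sub>\<infinity> i. r i = q}"

fun acc_holds :: "'q acc_cond \<Rightarrow> 'q set \<Rightarrow> bool" where
  "acc_holds (Buchi F) I \<longleftrightarrow> I \<inter> F \<noteq> {}"
| "acc_holds (CoBuchi F) I \<longleftrightarrow> I \<inter> F = {}"
| "acc_holds (Parity p) I \<longleftrightarrow> even (Min (p ` I))"
| "acc_holds (Rabin ps) I \<longleftrightarrow> (\<exists>(B, G)\<in>set ps. I \<inter> B = {} \<and> I \<inter> G \<noteq> {})"
| "acc_holds (Streett ps) I \<longleftrightarrow> (\<forall>(B, G)\<in>set ps. I \<inter> G \<noteq> {} \<longrightarrow> I \<inter> B \<noteq> {})"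

text \<open>A run on the infinite word w = w 0, w 1, ... (w i is the letter a_{i+1}).\<close>
definition is_run :: "('a, 'q) automaton \<Rightarrow> (nat \<Rightarrow> 'a) \<Rightarrow> (nat \<Rightarrow> 'q) \<Rightarrow> bool" where
  "is_run A w r \<longleftrightarrow> r 0 \<in> init A \<and> (\<forall>i. r (Suc i) \<in> trans A (r i) (w i))"

definition accepting :: "('a, 'q) automaton \<Rightarrow> (nat \<Rightarrow> 'q) \<Rightarrow> bool" where
  "accepting A r \<longleftrightarrow> acc_holds (acc A) (inf_states r)"

definition accepting_run :: "('a, 'q) automaton \<Rightarrow> (nat \<Rightarrow> 'a) \<Rightarrow> (nat \<Rightarrow> 'q) \<Rightarrow> bool" where
  "accepting_run A w r \<longleftrightarrow> is_run A w r \<and> accepting A r"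

definition language :: "('a, 'q) automaton \<Rightarrow> (nat \<Rightarrow> 'a) set" where
  "language A = {w. \<exists>r. accepting_run A w r}"

definition unambiguous :: "('a, 'q) automaton \<Rightarrow> bool" where
  "unambiguous A \<longleftrightarrow> (\<forall>w\<in>language A. \<exists>!r. accepting_run A w r)"

definition prefix :: "(nat \<Rightarrow> 'a) \<Rightarrow> nat \<Rightarrow> 'a list" where
  "prefix w i = map w [0..<i]"

definition gfg :: "('a, 'q) automaton \<Rightarrow> bool" where
  "gfg A \<longleftrightarrow> (\<exists>g :: 'a list \<Rightarrow> 'q. \<forall>w.
      is_run A w (\<lambda>i. g (prefix w i)) \<and>
      (w \<in> language A \<longrightarrow> accepting A (\<lambda>i. g (prefix w i))))"

definition det_by_pruning :: "('a, 'q) automaton \<Rightarrow> bool" where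
  "det_by_pruning A \<longleftrightarrow> (\<exists>q0\<in>init A. \<exists>\<delta>' :: 'q \<Rightarrow> 'a \<Rightarrow> 'q.
      (\<forall>q\<in>states A. \<forall>a. \<delta>' q a \<in> trans A q a) \<and>
      language \<lparr>states = states A, init = {q0}, trans = (\<lambda>q a. {\<delta>' q a}), acc = acc A\<rparr>
        = language A)"

end

theory Submission
  imports Defs
begin

text \<open>Call a state productive if some accepting run starts in it. In an unambiguous automaton,
  a GFG strategy g has no choice on productive states: any finite run on a prefix u that ends in
  a productive state can be extended to an accepting run, which by unambiguity is the run produced
  by g, so the run ends in g u. Hence pruning every transition to a productive successor
  (whenever one exists) keeps, on every accepted word, exactly the accepting run built by g.\<close>

definition run_from :: "('a, 'q) automaton \<Rightarrow> 'q \<Rightarrow> (nat \<Rightarrow> 'a) \<Rightarrow> (nat \<Rightarrow> 'q) \<Rightarrow> bool" where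
  "run_from A q w r \<longleftrightarrow> r 0 = q \<and> (\<forall>i. r (Suc i) \<in> trans A (r i) (w i))"

definition productive :: "('a, 'q) automaton \<Rightarrow> 'q \<Rightarrow> bool" where
  "productive A q \<longleftrightarrow> (\<exists>w r. run_from A q w r \<and> accepting A r)"

definition gfg_strategy :: "('a, 'q) automaton \<Rightarrow> ('a list \<Rightarrow> 'q) \<Rightarrow> bool" where
  "gfg_strategy A g \<longleftrightarrow> (\<forall>w. is_run A w (\<lambda>i. g (prefix w i)) \<and>
      (w \<in> language A \<longrightarrow> accepting A (\<lambda>i. g (prefix w i))))"

definition pruning :: "('a, 'q) automaton \<Rightarrow> 'q \<Rightarrow> ('q \<Rightarrow> 'a \<Rightarrow> 'q) \<Rightarrow> ('a, 'q) automaton" where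
  "pruning A q0 \<delta> = \<lparr>states = states A, init = {q0}, trans = (\<lambda>q a. {\<delta> q a}), acc = acc A\<rparr>"

definition prune :: "('a, 'q) automaton \<Rightarrow> 'q \<Rightarrow> 'a \<Rightarrow> 'q" where
  "prune A q a = (SOME q'. q' \<in> trans A q a \<and>
     (productive A q' \<or> (\<forall>p\<in>trans A q a. \<not> productive A p)))"

lemma gfg_iff_strategy: "gfg A \<longleftrightarrow> (\<exists>g. gfg_strategy A g)"
  by (simp add: gfg_def gfg_strategy_def)

lemma gfg_strategy_initial:
  assumes "gfg_strategy A g"
  shows "g [] \<in> init A"
  using assms by (simp add: gfg_strategy_def is_run_def prefix_def)

lemma inf_states_shift: "inf_states (\<lambda>j. r (j + n)) = inf_states r"
  unfolding inf_states_def cofinite_eq_sequentially frequently_def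
  using eventually_sequentially_seg[of "\<lambda>j. r j \<noteq> _" n] by simp

lemma accepting_shift: "accepting A (\<lambda>j. r (j + n)) \<longleftrightarrow> accepting A r"
  by (simp add: accepting_def inf_states_shift)

lemma productive_on_accepting_run:
  assumes "accepting_run A w r"
  shows "productive A (r n)"
  unfolding productive_def
proof (intro exI conjI)
  show "run_from A (r n) (\<lambda>j. w (j + n)) (\<lambda>j. r (j + n))"
    using assms by (simp add: accepting_run_def is_run_def run_from_def)
  show "accepting A (\<lambda>j. r (j + n))"
    using assms by (simp add: accepting_run_def accepting_shift)
qed

lemma accepting_run_append:
  assumes init: "\<rho> 0 \<in> init A"
    and steps: "\<forall>j<n. \<rho> (Suc j) \<in> trans A (\<rho> j) (w j)"
    and run: "run_from A (\<rho> n) v r"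
    and acc: "accepting A r"
  shows "accepting_run A (\<lambda>j. if j < n then w j else v (j - n))
                         (\<lambda>j. if j < n then \<rho> j else r (j - n))"
    (is "accepting_run A ?w ?r")
proof -
  have "?r 0 \<in> init A"
    using init run by (cases n) (auto simp: run_from_def)
  moreover have "?r (Suc j) \<in> trans A (?r j) (?w j)" for j
  proof (cases "Suc j < n")
    case True
    then show ?thesis using steps by auto
  next
    case False
    then consider "Suc j = n" | "n \<le> j" by linarith
    then show ?thesis
    proof cases
      case 1
      then show ?thesis using steps run by (auto simp: run_from_def)
    next
      case 2
      then have "Suc j - n = Suc (j - n)" by simp
      then show ?thesis using run 2 by (simp add: run_from_def)
    qed
  qed
  moreover have "(\<lambda>j. ?r (j + n)) = r" by simp
  then have "accepting A ?r"
    using acc accepting_shift[of A ?r n] by simp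
  ultimately show ?thesis by (simp add: accepting_run_def is_run_def)
qed

lemma gfg_strategy_unique_on_productive:
  assumes unamb: "unambiguous A"
    and g: "gfg_strategy A g"
    and init: "\<rho> 0 \<in> init A"
    and steps: "\<forall>j<n. \<rho> (Suc j) \<in> trans A (\<rho> j) (w j)"
    and prod: "productive A (\<rho> n)"
  shows "\<rho> n = g (prefix w n)"
proof -
  obtain v r where "run_from A (\<rho> n) v r" and "accepting A r"
    using prod by (auto simp: productive_def)
  define w' where "w' j = (if j < n then w j else v (j - n))" for j
  define R where "R j = (if j < n then \<rho> j else r (j - n))" for j
  have R: "accepting_run A w' R"
    unfolding w'_def R_def by (rule accepting_run_append) fact+
  then have "w' \<in> language A" by (auto simp: language_def)
  then have "accepting_run A w' (\<lambda>i. g (prefix w' i))"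
    using g by (simp add: gfg_strategy_def accepting_run_def)
  with R \<open>w' \<in> language A\<close> unamb have "R = (\<lambda>i. g (prefix w' i))"
    by (auto simp: unambiguous_def)
  moreover have "prefix w' n = prefix w n" by (simp add: prefix_def w'_def)
  moreover have "R n = \<rho> n" using \<open>run_from A (\<rho> n) v r\<close> by (simp add: R_def run_from_def)
  ultimately show ?thesis by metis
qed

lemma prune_spec:
  assumes "trans A q a \<noteq> {}"
  shows "prune A q a \<in> trans A q a \<and>
    (productive A (prune A q a) \<or> (\<forall>p\<in>trans A q a. \<not> productive A p))"
proof -
  have "\<exists>q'. q' \<in> trans A q a \<and> (productive A q' \<or> (\<forall>p\<in>trans A q a. \<not> productive A p))"
    using assms by blast
  then show ?thesis unfolding prune_def by (rule someI_ex)
qed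

lemma prune_in_trans: "trans A q a \<noteq> {} \<Longrightarrow> prune A q a \<in> trans A q a"
  using prune_spec[of A q a] by blast

lemma prune_productive:
  "q' \<in> trans A q a \<Longrightarrow> productive A q' \<Longrightarrow> productive A (prune A q a)"
  using prune_spec[of A q a] by blast

lemma language_pruning_subset:
  assumes wf: "wf_automaton A"
    and q0: "q0 \<in> init A"
    and \<delta>: "\<forall>q\<in>states A. \<forall>a. \<delta> q a \<in> trans A q a"
  shows "language (pruning A q0 \<delta>) \<subseteq> language A"
proof
  fix w
  assume "w \<in> language (pruning A q0 \<delta>)"
  then obtain r where r0: "r 0 = q0" and step: "\<forall>i. r (Suc i) = \<delta> (r i) (w i)"
    and acc: "accepting (pruning A q0 \<delta>) r"
    by (auto simp: language_def accepting_run_def is_run_def pruning_def)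
  have "r i \<in> states A" for i
  proof (induction i)
    case 0
    then show ?case using q0 r0 wf by (auto simp: wf_automaton_def)
  next
    case (Suc i)
    have "\<delta> (r i) (w i) \<in> trans A (r i) (w i)" using Suc \<delta> by blast
    moreover have "trans A (r i) (w i) \<subseteq> states A"
      using Suc wf by (simp add: wf_automaton_def)
    ultimately show ?case using step by auto
  qed
  then have "accepting_run A w r"
    using r0 step acc q0 \<delta> by (simp add: accepting_run_def is_run_def accepting_def pruning_def)
  then show "w \<in> language A" by (auto simp: language_def)
qed

lemma language_subset_pruning:
  assumes unamb: "unambiguous A"
    and g: "gfg_strategy A g"
  shows "language A \<subseteq> language (pruning A (g []) (prune A))"
proof
  fix w
  assume "w \<in> language A"
  define G where "G i = g (prefix w i)" for i
  have G: "accepting_run A w G"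
    using g \<open>w \<in> language A\<close> by (simp add: gfg_strategy_def accepting_run_def G_def[abs_def])
  have "G (Suc i) = prune A (G i) (w i)" for i
  proof -
    have step: "G (Suc i) \<in> trans A (G i) (w i)"
      using G by (simp add: accepting_run_def is_run_def)
    then have pruned_step: "prune A (G i) (w i) \<in> trans A (G i) (w i)"
      by (intro prune_in_trans) blast
    have "productive A (prune A (G i) (w i))"
      using step productive_on_accepting_run[OF G] by (rule prune_productive)
    define \<rho> where "\<rho> = G(Suc i := prune A (G i) (w i))"
    have "\<rho> (Suc i) = g (prefix w (Suc i))"
    proof (rule gfg_strategy_unique_on_productive[OF unamb g])
      show "\<rho> 0 \<in> init A"
        using G by (simp add: \<rho>_def accepting_run_def is_run_def)
      show "\<forall>j<Suc i. \<rho> (Suc j) \<in> trans A (\<rho> j) (w j)"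
        using G pruned_step by (auto simp: \<rho>_def accepting_run_def is_run_def less_Suc_eq)
      show "productive A (\<rho> (Suc i))"
        using \<open>productive A (prune A (G i) (w i))\<close> by (simp add: \<rho>_def)
    qed
    then show ?thesis by (simp add: \<rho>_def G_def)
  qed
  moreover have "G 0 = g []" by (simp add: G_def prefix_def)
  ultimately have "accepting_run (pruning A (g []) (prune A)) w G"
    using G by (simp add: accepting_run_def is_run_def accepting_def pruning_def)
  then show "w \<in> language (pruning A (g []) (prune A))" by (auto simp: language_def)
qed

theorem proposition9:
  fixes A :: "('a :: finite, 'q) automaton"
  assumes "wf_automaton A"
    and "complete_automaton A"
    and "unambiguous A"
    and "gfg A"
  shows "det_by_pruning A"
proof -
  obtain g where g: "gfg_strategy A g"
    using assms(4) by (auto simp: gfg_iff_strategy)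
  have q0: "g [] \<in> init A" using g by (rule gfg_strategy_initial)
  have \<delta>: "\<forall>q\<in>states A. \<forall>a. prune A q a \<in> trans A q a"
    using assms(2) unfolding complete_automaton_def by (blast intro: prune_in_trans)
  have "language (pruning A (g []) (prune A)) = language A"
    using language_pruning_subset[OF assms(1) q0 \<delta>] language_subset_pruning[OF assms(3) g]
    by blast
  with q0 \<delta> show ?thesis
    unfolding det_by_pruning_def pruning_def by (intro bexI[of _ "g []"] exI[of _ "prune A"] conjI)
qed

end
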